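(* Let $n\ge 1$ and let $T_1,\dots,T_n$ be independent Bernoulli random variables, $T_i$ having parameter $q_i=P(T_i=1)\in[0,1]$. Let $\overline T=\frac1n\sum_{i=1}^n T_i$, $\overline q=\frac1n\sum_{i=1}^n q_i$, and let $0\le\alpha\le 1/2$. Define the random variable $$\hat q=\begin{cases} I^{-1}_{\alpha}\big(n\overline T-1,\; n(1-\overline T)+2\big) & \text{if } n\overline T\ge 1,\\ 0 & \text{if } n\overline T=0.\end{cases}$$ Then $P(\hat q\le \overline q)\ge 1-\alpha$, i.e. $[\hat q,1]$ is a confidence interval for $\overline q$ with confidence level $1-\alpha$.
   Context: $I_x(\mathsf a,\mathsf b)$ denotes the regularized incomplete Beta function (the cumulative distribution function at $x$ of the Beta$(\mathsf a,\mathsf b)$ distribution). $I^{-1}_\alpha(\mathsf a,\mathsf b)$ denotes its inverse in the first variable, i.e. the value $x\in[0,1]$ with $I_x(\mathsf a,\mathsf b)=\alpha$. When the first argument equals $0$ (the case $n\overline T=1$), $I^{-1}_\alpha(0,\mathsf b)$ is understood as $0$ (the limiting value, since $I_x(0,\mathsf b)=1$ for all $x>0$). *)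

theory Defs
  imports "HOL-Probability.Probability"
begin

definition reg_inc_beta :: "real \<Rightarrow> real \<Rightarrow> real \<Rightarrow> real" where
  "reg_inc_beta x a b =
     (LBINT t=0..x. t powr (a - 1) * (1 - t) powr (b - 1)) /
     (LBINT t=0..1. t powr (a - 1) * (1 - t) powr (b - 1))"

text \<open>Inverse in the first variable: the x in [0,1] with I_x(a,b) = alpha.
  For first argument 0 the value is 0 by convention (limiting value).\<close>
definition reg_inc_beta_inv :: "real \<Rightarrow> real \<Rightarrow> real \<Rightarrow> real" where
  "reg_inc_beta_inv \<alpha> a b =
     (if a = 0 then 0 else (THE x. x \<in> {0..1} \<and> reg_inc_beta x a b = \<alpha>))"

text \<open>The estimator q-hat as a function of k = n * T-bar (the number of successes).\<close>
definition q_hat :: "nat \<Rightarrow> real \<Rightarrow> nat \<Rightarrow> real" where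
  "q_hat n \<alpha> k =
     (if k \<ge> 1 then reg_inc_beta_inv \<alpha> (real k - 1) (real n - real k + 2) else 0)"

end

theory Submission
  imports Defs
begin

text \<open>
  The regularised incomplete Beta function satisfies I_x(a, n - a + 1) = P(Bin(n, x) \<ge> a), so
  q-hat exceeds the mean q-bar only when the number S of successes reaches an index k with
  P(Bin(n, q-bar) \<ge> k - 1) < \<alpha> \<le> 1/2. A binomial law with integer mean m has median m,
  which forces n q-bar + 1 \<le> k, and in that range Hoeffding's theorem on sums of independent
  Bernoulli variables gives P(S \<ge> k) \<le> P(Bin(n, q-bar) \<ge> k) < \<alpha>.

  Hoeffding's bound is proved by an extremal argument. Among success profiles with the given
  mean take one maximising P(S \<ge> k) and, among those, minimising the sum of squares. Averaging
  two unequal coordinates would not decrease the tail but would decrease the sum of squares,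
  so the pair curvature is negative; then spreading the two coordinates apart would increase
  the tail unless they already sit at 0 and 1. Hence the extremal profile takes the values 0, 1
  and a single interior value a, and the sign of the curvature, a difference of binomial point
  masses, excludes mixing a with 0 or 1 once k \<ge> n q-bar + 1.
\<close>

definition poibin_weight :: "'i set \<Rightarrow> ('i \<Rightarrow> real) \<Rightarrow> 'i set \<Rightarrow> real" where
  "poibin_weight I q A = (\<Prod>i\<in>A. q i) * (\<Prod>i\<in>I - A. 1 - q i)"

definition poibin_prob :: "'i set \<Rightarrow> ('i \<Rightarrow> real) \<Rightarrow> (nat \<Rightarrow> bool) \<Rightarrow> real" where
  "poibin_prob I q P = (\<Sum>A | A \<subseteq> I \<and> P (card A). poibin_weight I q A)"

lemma finite_subsets_card: "finite I \<Longrightarrow> finite {A. A \<subseteq> I \<and> P (card A)}"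
  by (rule finite_subset[of _ "Pow I"]) auto

lemma subsets_insert_card:
  assumes "finite J" "i \<notin> J"
  shows "{A. A \<subseteq> insert i J \<and> P (card A)}
       = {A. A \<subseteq> J \<and> P (card A)} \<union> insert i ` {B. B \<subseteq> J \<and> P (Suc (card B))}"
    (is "?L = ?S \<union> insert i ` ?S'")
proof (rule set_eqI, rule iffI)
  fix A assume A: "A \<in> ?L"
  show "A \<in> ?S \<union> insert i ` ?S'"
  proof (cases "i \<in> A")
    case True
    have "finite A" using A assms(1) by (auto intro: finite_subset)
    then have "card A = Suc (card (A - {i}))" using True by (simp only: card_Suc_Diff1)
    then have "A - {i} \<in> ?S'" using A by auto
    moreover have "A = insert i (A - {i})" using True by auto
    ultimately have "A \<in> insert i ` ?S'" by (rule rev_image_eqI)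
    then show ?thesis by blast
  next
    case False then show ?thesis using A by auto
  qed
next
  fix A assume "A \<in> ?S \<union> insert i ` ?S'"
  then show "A \<in> ?L" using assms by (auto simp: card_insert_if finite_subset)
qed

lemma poibin_prob_insert:
  assumes "finite J" "i \<notin> J"
  shows "poibin_prob (insert i J) q P
           = (1 - q i) * poibin_prob J q P + q i * poibin_prob J q (\<lambda>c. P (Suc c))"
proof -
  let ?S = "{A. A \<subseteq> J \<and> P (card A)}" and ?S' = "{B. B \<subseteq> J \<and> P (Suc (card B))}"
  have inj: "inj_on (insert i) ?S'"
    using assms unfolding inj_on_def by (metis insert_ident mem_Collect_eq subset_iff)
  have without_i: "poibin_weight (insert i J) q A = (1 - q i) * poibin_weight J q A" if "A \<subseteq> J" for A
  proof -
    have "insert i J - A = insert i (J - A)" using that assms by auto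
    then show ?thesis using that assms unfolding poibin_weight_def by (simp add: finite_subset)
  qed
  have with_i: "poibin_weight (insert i J) q (insert i B) = q i * poibin_weight J q B" if "B \<subseteq> J" for B
  proof -
    have "insert i J - insert i B = J - B" "i \<notin> B" using that assms by auto
    then show ?thesis using that assms unfolding poibin_weight_def by (simp add: finite_subset)
  qed
  have "poibin_prob (insert i J) q P = (\<Sum>A\<in>?S. poibin_weight (insert i J) q A)
      + (\<Sum>A\<in>insert i ` ?S'. poibin_weight (insert i J) q A)"
    unfolding poibin_prob_def subsets_insert_card[OF assms]
    by (rule sum.union_disjoint) (use assms in \<open>auto intro: finite_subsets_card\<close>)
  also have "(\<Sum>A\<in>?S. poibin_weight (insert i J) q A) = (1 - q i) * poibin_prob J q P"
    unfolding poibin_prob_def sum_distrib_left by (rule sum.cong) (auto simp: without_i)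
  also have "(\<Sum>A\<in>insert i ` ?S'. poibin_weight (insert i J) q A)
      = (\<Sum>B\<in>?S'. poibin_weight (insert i J) q (insert i B))"
    by (simp add: sum.reindex[OF inj])
  also have "\<dots> = q i * poibin_prob J q (\<lambda>c. P (Suc c))"
    unfolding poibin_prob_def sum_distrib_left by (rule sum.cong) (auto simp: with_i)
  finally show ?thesis .
qed

lemma poibin_prob_empty: "poibin_prob {} q P = (if P 0 then 1 else 0)"
proof -
  have subsets: "{A. A \<subseteq> {} \<and> P (card A)} = (if P 0 then {{}} else {})" by auto
  show ?thesis unfolding poibin_prob_def subsets by (simp add: poibin_weight_def)
qed

lemma poibin_prob_cong:
  "(\<And>i. i \<in> I \<Longrightarrow> q i = q' i) \<Longrightarrow> poibin_prob I q P = poibin_prob I q' P"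
  unfolding poibin_prob_def poibin_weight_def
  by (intro sum.cong arg_cong2[where f="(*)"] prod.cong) auto

lemma poibin_prob_cong_pred:
  assumes "finite I" "\<And>c. c \<le> card I \<Longrightarrow> P c = P' c"
  shows "poibin_prob I q P = poibin_prob I q P'"
proof -
  have "{A. A \<subseteq> I \<and> P (card A)} = {A. A \<subseteq> I \<and> P' (card A)}"
  proof (intro Collect_cong conj_cong refl)
    fix A assume "A \<subseteq> I"
    then show "P (card A) = P' (card A)" using assms by (simp add: card_mono)
  qed
  then show ?thesis unfolding poibin_prob_def by simp
qed

lemma poibin_prob_nonneg:
  "(\<And>i. i \<in> I \<Longrightarrow> 0 \<le> q i \<and> q i \<le> 1) \<Longrightarrow> 0 \<le> poibin_prob I q P"
  unfolding poibin_prob_def poibin_weight_def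
  by (intro sum_nonneg mult_nonneg_nonneg prod_nonneg) auto

lemma poibin_prob_split:
  assumes "finite I"
  shows "poibin_prob I q P = poibin_prob I q (\<lambda>c. P c \<and> Q c) + poibin_prob I q (\<lambda>c. P c \<and> \<not> Q c)"
proof -
  have "{A. A \<subseteq> I \<and> P (card A)}
      = {A. A \<subseteq> I \<and> P (card A) \<and> Q (card A)} \<union> {A. A \<subseteq> I \<and> P (card A) \<and> \<not> Q (card A)}"
    by auto
  then show ?thesis unfolding poibin_prob_def
    by (simp only:) (rule sum.union_disjoint, auto intro: finite_subsets_card assms)
qed

lemma poibin_prob_True: "finite I \<Longrightarrow> poibin_prob I q (\<lambda>_. True) = 1"
  by (induction I rule: finite_induct) (simp_all add: poibin_prob_empty poibin_prob_insert)

lemma poibin_prob_Not: "finite I \<Longrightarrow> poibin_prob I q (\<lambda>c. \<not> P c) = 1 - poibin_prob I q P"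
  using poibin_prob_split[of I q "\<lambda>_. True" P] by (simp add: poibin_prob_True)

lemma poibin_prob_mono_pred:
  assumes "finite I" "\<And>i. i \<in> I \<Longrightarrow> 0 \<le> q i \<and> q i \<le> 1"
    and "\<And>c. c \<le> card I \<Longrightarrow> P c \<Longrightarrow> Q c"
  shows "poibin_prob I q P \<le> poibin_prob I q Q"
proof -
  have "poibin_prob I q Q = poibin_prob I q P + poibin_prob I q (\<lambda>c. Q c \<and> \<not> P c)"
    using poibin_prob_split[OF assms(1), of q Q P] poibin_prob_cong_pred[OF assms(1), of "\<lambda>c. Q c \<and> P c" P]
      assms(3) by auto
  then show ?thesis using poibin_prob_nonneg[OF assms(2)] by simp
qed

lemma poibin_prob_Un_zeros:
  assumes "finite Z" "finite J" "Z \<inter> J = {}" "\<And>i. i \<in> Z \<Longrightarrow> q i = 0"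
  shows "poibin_prob (Z \<union> J) q P = poibin_prob J q P"
  using assms
  by (induction Z rule: finite_induct) (simp_all add: poibin_prob_insert)

lemma poibin_prob_Un_ones:
  assumes "finite Os" "finite J" "Os \<inter> J = {}" "\<And>i. i \<in> Os \<Longrightarrow> q i = 1"
  shows "poibin_prob (Os \<union> J) q P = poibin_prob J q (\<lambda>c. P (c + card Os))"
  using assms
proof (induction Os arbitrary: P rule: finite_induct)
  case (insert i Os)
  then show ?case by (simp add: poibin_prob_insert)
qed simp

definition binom_term :: "nat \<Rightarrow> real \<Rightarrow> nat \<Rightarrow> real" where
  "binom_term n x k = real (n choose k) * x ^ k * (1 - x) ^ (n - k)"

lemma poibin_prob_const:
  assumes "finite J"
  shows "poibin_prob J (\<lambda>_. a) P = (\<Sum>c | c \<le> card J \<and> P c. binom_term (card J) a c)"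
proof -
  let ?S = "{A. A \<subseteq> J \<and> P (card A)}" and ?f = "\<lambda>c. a ^ c * (1 - a) ^ (card J - c)"
  have "poibin_prob J (\<lambda>_. a) P = (\<Sum>A\<in>?S. ?f (card A))"
    unfolding poibin_prob_def poibin_weight_def
    by (rule sum.cong) (use assms in \<open>auto simp: card_Diff_subset finite_subset\<close>)
  also have "\<dots> = (\<Sum>c | c \<le> card J \<and> P c. \<Sum>A | A \<in> ?S \<and> card A = c. ?f (card A))"
    by (rule sum.group[symmetric]) (use assms in \<open>auto simp: finite_subsets_card card_mono\<close>)
  also have "\<dots> = (\<Sum>c | c \<le> card J \<and> P c. binom_term (card J) a c)"
  proof (rule sum.cong)
    fix c assume "c \<in> {c. c \<le> card J \<and> P c}"
    then have "{A. A \<in> ?S \<and> card A = c} = {A. A \<subseteq> J \<and> card A = c}" by auto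
    then show "(\<Sum>A | A \<in> ?S \<and> card A = c. ?f (card A)) = binom_term (card J) a c"
      using n_subsets[OF assms] by (simp add: binom_term_def)
  qed simp
  finally show ?thesis .
qed

lemma poibin_prob_continuous: "finite I \<Longrightarrow> continuous_on S (\<lambda>q. poibin_prob I q P)"
  unfolding poibin_prob_def poibin_weight_def
  by (intro continuous_intros continuous_on_subset[OF continuous_on_product_coordinates]) auto

lemma (in prob_space) prob_success_set:
  assumes ind: "indep_vars (\<lambda>_. count_space UNIV) T I" and "finite I" "I \<noteq> {}"
    and q: "\<And>i. i \<in> I \<Longrightarrow> prob {\<omega> \<in> space M. T i \<omega>} = q i" and "A \<subseteq> I"
  shows "prob {\<omega> \<in> space M. {i \<in> I. T i \<omega>} = A} = poibin_weight I q A"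
proof -
  have rv: "\<And>i. i \<in> I \<Longrightarrow> random_variable (count_space UNIV) (T i)"
    and indep: "indep_sets (\<lambda>i. sigma_sets (space M) {T i -` B \<inter> space M | B. B \<in> sets (count_space UNIV)}) I"
    using ind unfolding indep_vars_def by auto
  define X where "X i = T i -` {i \<in> A} \<inter> space M" for i
  have success_event: "{\<omega> \<in> space M. T i \<omega>} \<in> events" if "i \<in> I" for i
    using measurable_sets[OF rv[OF that], of "{True}"] by (simp add: vimage_def Int_def conj_commute)
  have prob_X: "prob (X i) = (if i \<in> A then q i else 1 - q i)" if "i \<in> I" for i
  proof (cases "i \<in> A")
    case True
    then have "X i = {\<omega> \<in> space M. T i \<omega>}" by (auto simp: X_def)
    then show ?thesis using True q[OF that] by simp
  next
    case False
    then have "X i = space M - {\<omega> \<in> space M. T i \<omega>}" by (auto simp: X_def)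
    then show ?thesis using False q[OF that] prob_compl[OF success_event[OF that]] by simp
  qed
  have "{\<omega> \<in> space M. {i \<in> I. T i \<omega>} = A} = (\<Inter>i\<in>I. X i)"
    using assms(3,5) by (auto simp: X_def)
  also have "prob \<dots> = (\<Prod>i\<in>I. prob (X i))"
    by (rule indep_setsD[OF indep subset_refl assms(3,2)]) (auto simp: X_def intro: sigma_sets.Basic)
  also have "\<dots> = (\<Prod>i\<in>I. if i \<in> A then q i else 1 - q i)"
    by (rule prod.cong) (auto simp: prob_X)
  also have "\<dots> = poibin_weight I q A"
  proof -
    have "I \<inter> {i. i \<in> A} = A" "I \<inter> - {i. i \<in> A} = I - A" using assms(5) by auto
    then show ?thesis unfolding poibin_weight_def prod.If_cases[OF assms(2)] by simp
  qed
  finally show ?thesis .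
qed

lemma (in prob_space) prob_card_successes:
  assumes ind: "indep_vars (\<lambda>_. count_space UNIV) T I" and fin: "finite I" and ne: "I \<noteq> {}"
    and q: "\<And>i. i \<in> I \<Longrightarrow> prob {\<omega> \<in> space M. T i \<omega>} = q i"
  shows "prob {\<omega> \<in> space M. P (card {i \<in> I. T i \<omega>})} = poibin_prob I q P"
proof -
  let ?S = "{A. A \<subseteq> I \<and> P (card A)}"
  define E where "E A = {\<omega> \<in> space M. {i \<in> I. T i \<omega>} = A}" for A
  have events: "E A \<in> events" if "A \<subseteq> I" for A
  proof -
    have "T i -` {i \<in> A} \<inter> space M \<in> events" if "i \<in> I" for i
      using ind that unfolding indep_vars_def by (auto intro: measurable_sets)
    then have "(\<Inter>i\<in>I. T i -` {i \<in> A} \<inter> space M) \<in> events"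
      using fin ne by (intro sets.finite_INT)
    moreover have "E A = (\<Inter>i\<in>I. T i -` {i \<in> A} \<inter> space M)"
      using that ne by (auto simp: E_def)
    ultimately show ?thesis by simp
  qed
  have "{\<omega> \<in> space M. P (card {i \<in> I. T i \<omega>})} = (\<Union>A\<in>?S. E A)"
    by (auto simp: E_def)
  also have "prob \<dots> = (\<Sum>A\<in>?S. prob (E A))"
  proof -
    have "E ` ?S \<subseteq> events" using events by blast
    moreover have "disjoint_family_on E ?S" unfolding disjoint_family_on_def E_def by auto
    ultimately show ?thesis by (rule finite_measure_finite_Union[OF finite_subsets_card[OF fin]])
  qed
  also have "\<dots> = poibin_prob I q P"
    unfolding poibin_prob_def E_def
    by (intro sum.cong refl prob_success_set[OF ind fin ne q]) simp_all
  finally show ?thesis .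
qed

definition binom_tail :: "nat \<Rightarrow> nat \<Rightarrow> real \<Rightarrow> real" where
  "binom_tail n a x = (\<Sum>k=a..n. binom_term n x k)"

definition binom_tail_density :: "nat \<Rightarrow> nat \<Rightarrow> real \<Rightarrow> real" where
  "binom_tail_density n a x = real n * real ((n - 1) choose (a - 1)) * x ^ (a - 1) * (1 - x) ^ (n - a)"

lemma binom_term_nonneg: "0 \<le> x \<Longrightarrow> x \<le> 1 \<Longrightarrow> 0 \<le> binom_term n x k"
  unfolding binom_term_def by simp

lemma binom_term_Suc:
  assumes "k < n"
  shows "binom_term n x (Suc k) * real (Suc k) * (1 - x) = binom_term n x k * real (n - k) * x"
proof -
  have "(n choose Suc k) * Suc k = (n choose k) * (n - k)"
    using binomial_absorption[of k n] binomial_absorb_comp[of n k] by (simp add: mult.commute)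
  then have choose: "real (n choose Suc k) * real (Suc k) = real (n choose k) * real (n - k)"
    by (metis of_nat_mult)
  have "n - k = Suc (n - Suc k)" using assms by simp
  then have "binom_term n x k * real (n - k) * x
      = (real (n choose k) * real (n - k)) * x ^ k * x * (1 - x) ^ (n - Suc k) * (1 - x)"
    unfolding binom_term_def by (simp add: algebra_simps)
  also have "\<dots> = binom_term n x (Suc k) * real (Suc k) * (1 - x)"
    unfolding choose[symmetric] binom_term_def by (simp add: algebra_simps)
  finally show ?thesis ..
qed

lemma binom_term_sum: "(\<Sum>k=0..n. binom_term n x k) = 1"
  using binomial_ring[of x "1 - x" n] by (simp add: atMost_atLeast0 binom_term_def)

lemma poibin_prob_ge_const:
  "finite I \<Longrightarrow> poibin_prob I (\<lambda>_. x) (\<lambda>c. a \<le> c) = binom_tail (card I) a x"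
  unfolding binom_tail_def by (subst poibin_prob_const) (auto intro!: sum.cong)

lemma binom_tail_Suc:
  "a < n \<Longrightarrow> binom_tail n a x = binom_term n x a + binom_tail n (Suc a) x"
  unfolding binom_tail_def by (subst sum.atLeast_Suc_atMost) auto

lemma binom_tail_Suc_le:
  "a < n \<Longrightarrow> 0 \<le> x \<Longrightarrow> x \<le> 1 \<Longrightarrow> binom_tail n (Suc a) x \<le> binom_tail n a x"
  using binom_tail_Suc[of a n x] binom_term_nonneg[of x n a] by simp

lemma binom_tail_nonneg: "0 \<le> x \<Longrightarrow> x \<le> 1 \<Longrightarrow> 0 \<le> binom_tail n a x"
  unfolding binom_tail_def by (intro sum_nonneg binom_term_nonneg)

lemma binom_tail_at_0: "1 \<le> a \<Longrightarrow> binom_tail n a 0 = 0"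
  unfolding binom_tail_def binom_term_def by (intro sum.neutral) auto

lemma binom_tail_at_1: "a \<le> n \<Longrightarrow> binom_tail n a 1 = 1"
proof -
  assume "a \<le> n"
  have "binom_tail n a 1 = (\<Sum>k=a..n. if k = n then 1 else 0)"
    unfolding binom_tail_def binom_term_def by (intro sum.cong) auto
  then show ?thesis using \<open>a \<le> n\<close> by simp
qed

lemma continuous_on_binom_tail: "continuous_on S (binom_tail n a)"
  unfolding binom_tail_def binom_term_def by (intro continuous_intros)

lemma binom_term_has_derivative:
  assumes "1 \<le> a" "a < n"
  shows "((\<lambda>x. binom_term n x a) has_real_derivative
           binom_tail_density n a x - binom_tail_density n (Suc a) x) (at x)"
proof -
  obtain r where r: "n - a = Suc r" using assms(2) by (metis Suc_diff_Suc)
  define C where "C = real (n choose a)"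
  define C1 where "C1 = real ((n - 1) choose (a - 1))"
  define C2 where "C2 = real ((n - 1) choose a)"
  have deriv: "((\<lambda>x. binom_term n x a) has_real_derivative
      C * (real a * x ^ (a - 1) * (1 - x) ^ Suc r - x ^ a * (real (Suc r) * (1 - x) ^ r))) (at x)"
    unfolding binom_term_def C_def r by (rule derivative_eq_intros refl)+ (simp add: algebra_simps)
  have c1: "real a * C = real n * C1"
    using binomial_absorption[of "a - 1" n] assms(1) unfolding C_def C1_def
    by (metis Suc_diff_le diff_Suc_1 of_nat_mult)
  have c2: "real (Suc r) * C = real n * C2"
    using binomial_absorb_comp[of n a] unfolding C_def C2_def r by (metis of_nat_mult)
  have "n - Suc a = r" using r by simp
  have "C * (real a * x ^ (a - 1) * (1 - x) ^ Suc r - x ^ a * (real (Suc r) * (1 - x) ^ r))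
      = (real a * C) * x ^ (a - 1) * (1 - x) ^ Suc r - (real (Suc r) * C) * x ^ a * (1 - x) ^ r"
    by (simp add: algebra_simps)
  also have "\<dots> = binom_tail_density n a x - binom_tail_density n (Suc a) x"
    unfolding c1 c2 binom_tail_density_def C1_def C2_def r \<open>n - Suc a = r\<close> by simp
  finally show ?thesis using deriv by simp
qed

lemma binom_tail_has_derivative:
  assumes "1 \<le> a" "a \<le> n"
  shows "(binom_tail n a has_real_derivative binom_tail_density n a x) (at x)"
  using assms
proof (induction "n - a" arbitrary: a)
  case 0
  then have "binom_tail n a = (\<lambda>x. x ^ n)"
    by (auto simp: binom_tail_def binom_term_def fun_eq_iff)
  then show ?case using 0
    by (auto intro!: derivative_eq_intros simp: binom_tail_density_def)
next
  case (Suc r)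
  then have "a < n" by simp
  then have split: "binom_tail n a = (\<lambda>x. binom_term n x a + binom_tail n (Suc a) x)"
    by (intro ext binom_tail_Suc)
  have "(binom_tail n (Suc a) has_real_derivative binom_tail_density n (Suc a) x) (at x)"
    using Suc by (intro Suc.hyps) auto
  from DERIV_add[OF binom_term_has_derivative[OF Suc.prems(1) \<open>a < n\<close>] this]
  show ?case unfolding split by simp
qed

lemma binom_tail_density_pos:
  "1 \<le> a \<Longrightarrow> a \<le> n \<Longrightarrow> 0 < x \<Longrightarrow> x < 1 \<Longrightarrow> 0 < binom_tail_density n a x"
  unfolding binom_tail_density_def by simp

lemma binom_tail_strict_mono:
  assumes "1 \<le> a" "a \<le> n" "0 \<le> x" "x < y" "y \<le> 1"
  shows "binom_tail n a x < binom_tail n a y"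
proof -
  obtain z where z: "x < z" "z < y"
    and "binom_tail n a y - binom_tail n a x = (y - x) * binom_tail_density n a z"
    using MVT2[OF assms(4) binom_tail_has_derivative[OF assms(1,2)]] by blast
  moreover have "0 < binom_tail_density n a z"
    using z assms by (intro binom_tail_density_pos) auto
  ultimately show ?thesis using assms(4) by (smt (verit) mult_pos_pos)
qed

lemma binom_tail_mono:
  "1 \<le> a \<Longrightarrow> a \<le> n \<Longrightarrow> 0 \<le> x \<Longrightarrow> x \<le> y \<Longrightarrow> y \<le> 1 \<Longrightarrow> binom_tail n a x \<le> binom_tail n a y"
  using binom_tail_strict_mono[of a n x y] by (cases "x = y") auto

lemma binom_term_Suc_at_ratio:
  assumes "m \<le> n" "k < n"
  shows "binom_term n (m / n) (Suc k) * real (Suc k) * real (n - m)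
       = binom_term n (m / n) k * real (n - k) * real m"
proof -
  let ?p = "real m / real n"
  have n: "0 < real n" using assms by simp
  have "(1 - ?p) * real n = real (n - m)" "?p * real n = real m"
    using assms n by (simp_all add: field_simps of_nat_diff)
  moreover have "binom_term n ?p (Suc k) * real (Suc k) * ((1 - ?p) * real n)
      = binom_term n ?p k * real (n - k) * (?p * real n)"
    using binom_term_Suc[OF assms(2), of ?p] by (simp only: mult.assoc [symmetric])
  ultimately show ?thesis by simp
qed

lemma reflected_ratio_step:
  fixes M N i u v X Y :: real
  assumes "0 \<le> i" "i < M" "M \<le> N" "0 \<le> u" "u \<le> v"
    and below: "u * (M - i) * N = X * (N + i + 1) * M"
    and above: "Y * (M + i) * N = v * (N - i + 1) * M"
  shows "X \<le> Y"
proof -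
  define K where "K = (N + i + 1) * M * ((M + i) * N)"
  have "X * K = (X * (N + i + 1) * M) * ((M + i) * N)" by (simp only: K_def mult_ac)
  also have "\<dots> = (u * (M - i) * N) * ((M + i) * N)" by (simp only: below)
  also have "\<dots> = u * ((M - i) * (M + i) * N^2)" by (simp only: mult_ac power2_eq_square)
  also have "\<dots> \<le> v * ((M - i) * (M + i) * N^2)"
    using assms by (intro mult_right_mono) simp_all
  also have "\<dots> \<le> v * ((N + i + 1) * (N - i + 1) * M^2)"
  proof (rule mult_left_mono)
    have "i^2 * (M^2 - N^2) \<le> 0"
      using assms by (intro mult_nonneg_nonpos) (auto intro!: power_mono)
    moreover have "0 \<le> M^2 * (2 * N + 1)" using assms by simp
    ultimately show "(M - i) * (M + i) * N^2 \<le> (N + i + 1) * (N - i + 1) * M^2"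
      by (simp add: algebra_simps power2_eq_square)
  qed (use assms in simp)
  also have "\<dots> = (v * (N - i + 1) * M) * ((N + i + 1) * M)" by (simp only: mult_ac power2_eq_square)
  also have "\<dots> = (Y * (M + i) * N) * ((N + i + 1) * M)" by (simp only: above)
  also have "\<dots> = Y * K" by (simp only: K_def mult_ac)
  finally show ?thesis using assms by (simp add: K_def)
qed

lemma binom_term_mean_reflect_le:
  assumes "1 \<le> m" "2 * m \<le> n" "j < m"
  shows "binom_term n (m / n) (m - Suc j) \<le> binom_term n (m / n) (m + j)"
proof -
  let ?b = "binom_term n (m / n)"
  define M where "M = real m"
  define N where "N = real (n - m)"
  have MN: "0 < M" "M \<le> N" using assms by (simp_all add: M_def N_def of_nat_diff)
  have b_nonneg: "0 \<le> ?b k" for k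
    using assms by (intro binom_term_nonneg) auto
  show ?thesis using assms(3)
  proof (induction j)
    case 0
    have "?b m * M * N = ?b (m - 1) * (N + 1) * M"
      using binom_term_Suc_at_ratio[of m n "m - 1"] assms
      by (simp add: M_def N_def of_nat_diff algebra_simps)
    then have "?b m * N = ?b (m - 1) * (N + 1)" using MN by simp
    then have "?b (m - 1) * N \<le> ?b m * N" using b_nonneg[of "m - 1"] by (simp add: algebra_simps)
    then show ?case using MN by simp
  next
    case (Suc j)
    define i where "i = real (Suc j)"
    show ?case
    proof (rule reflected_ratio_step)
      show "0 \<le> i" "i < M" using Suc.prems by (simp_all add: i_def M_def)
      show "M \<le> N" "0 \<le> ?b (m - Suc j)" "?b (m - Suc j) \<le> ?b (m + j)"
        using MN b_nonneg Suc by simp_all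
      show "?b (m - Suc j) * (M - i) * N = ?b (m - Suc (Suc j)) * (N + i + 1) * M"
        using binom_term_Suc_at_ratio[of m n "m - Suc (Suc j)"] assms Suc.prems
        by (simp add: M_def N_def i_def of_nat_diff Suc_diff_Suc algebra_simps)
      show "?b (m + Suc j) * (M + i) * N = ?b (m + j) * (N - i + 1) * M"
        using binom_term_Suc_at_ratio[of m n "m + j"] assms Suc.prems
        by (simp add: M_def N_def i_def of_nat_diff algebra_simps)
    qed
  qed
qed

lemma binom_tail_mean_ge_half_of_le_half:
  assumes "1 \<le> m" "2 * m \<le> n"
  shows "1/2 \<le> binom_tail n m (m / n)"
proof -
  let ?b = "binom_term n (m / n)"
  have b_nonneg: "0 \<le> ?b k" for k
    using assms by (intro binom_term_nonneg) auto
  have "(\<Sum>k<m. ?b k) = (\<Sum>j<m. ?b (m - Suc j))"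
    by (rule sum.nat_diff_reindex[symmetric])
  also have "\<dots> \<le> (\<Sum>j<m. ?b (m + j))"
    by (intro sum_mono binom_term_mean_reflect_le[OF assms]) auto
  also have "\<dots> = (\<Sum>k=m..<m+m. ?b k)"
    using sum.shift_bounds_nat_ivl[of ?b 0 m m] by (simp add: lessThan_atLeast0 add.commute)
  also have "\<dots> \<le> binom_tail n m (m / n)"
    unfolding binom_tail_def by (rule sum_mono2) (use assms b_nonneg in auto)
  finally have "(\<Sum>k<m. ?b k) \<le> binom_tail n m (m / n)" .
  moreover have "(\<Sum>k<m. ?b k) + binom_tail n m (m / n) = 1"
  proof -
    have "{0..n} = {..<m} \<union> {m..n}" using assms by auto
    then show ?thesis
      unfolding binom_tail_def binom_term_sum[of n "m / n", symmetric]
      by (simp add: sum.union_disjoint ivl_disj_int)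
  qed
  ultimately show ?thesis by linarith
qed

lemma weighted_log_ratio_le:
  fixes c u s :: real
  assumes "0 < u" "u \<le> c" "0 \<le> s" "s < u"
  shows "c * ln (c + s) + u * ln (u - s) \<le> c * ln (c - s) + u * ln (u + s)"
proof -
  define d where "d t = c * (ln (c - t) - ln (c + t)) + u * (ln (u + t) - ln (u - t))" for t
  define d' where "d' t = u * (1 / (u + t) + 1 / (u - t)) - c * (1 / (c - t) + 1 / (c + t))" for t
  have "d 0 \<le> d s"
  proof (rule deriv_nonneg_imp_mono[where g = d and g' = d'])
    fix t assume "t \<in> {0..s}"
    then have t: "0 \<le> t" "t < u" "t < c" using assms by auto
    show "(d has_real_derivative d' t) (at t)"
      unfolding d_def [abs_def] using t assms
      by (auto intro!: derivative_eq_intros simp: d'_def divide_simps)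
  next
    fix t assume "t \<in> {0..s}"
    then have t: "0 \<le> t" "t < u" "t < c" using assms by auto
    have "t * t * (u * u) \<le> t * t * (c * c)"
      using assms t by (intro mult_left_mono mult_mono) auto
    then have "c * c * ((u - t) * (u + t)) \<le> u * u * ((c - t) * (c + t))"
      by (simp add: algebra_simps)
    then have "2 * (c * c) / ((c - t) * (c + t)) \<le> 2 * (u * u) / ((u - t) * (u + t))"
      using t by (simp add: divide_simps)
    moreover have "u * (1 / (u + t) + 1 / (u - t)) = 2 * (u * u) / ((u - t) * (u + t))"
      "c * (1 / (c - t) + 1 / (c + t)) = 2 * (c * c) / ((c - t) * (c + t))"
      using t by (simp_all add: field_simps)
    ultimately show "0 \<le> d' t" by (simp add: d'_def)
  qed (use assms in simp)
  then show ?thesis by (simp add: d_def algebra_simps)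
qed

lemma binom_tail_density_reflect_le:
  fixes m n :: nat and s :: real
  defines "c \<equiv> (real m - 1) / (real n - 1)"
  assumes "n + 1 \<le> 2 * m" "m < n" "0 \<le> s" "s \<le> 1 - c"
  shows "binom_tail_density n m (c + s) \<le> binom_tail_density n m (c - s)"
proof -
  define u where "u = 1 - c"
  define L where "L = real n - 1"
  let ?h = "\<lambda>t. t ^ (m - 1) * (1 - t) ^ (n - m)"
  have L: "0 < L" using assms by (simp add: L_def)
  have Lc: "real (m - 1) = L * c" and Lu: "real (n - m) = L * u"
    using assms L by (simp_all add: c_def L_def u_def of_nat_diff field_simps)
  have "L * u \<le> L * c" "0 < L * u"
    using assms unfolding Lc[symmetric] Lu[symmetric] by (simp_all add: of_nat_diff)
  then have u: "0 < u" "u \<le> c" using L by (simp_all add: zero_less_mult_iff)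
  have "?h (c + s) \<le> ?h (c - s)"
  proof (cases "s = u")
    case True
    have "1 - (c + s) = 0" "0 \<le> c - s" "0 \<le> 1 - (c - s)" using True u by (simp_all add: u_def)
    then show ?thesis using assms by (simp add: zero_power)
  next
    case False
    then have s: "0 \<le> s" "s < u" using assms by (simp_all add: u_def)
    have pos: "0 < c + s" "0 < u - s" "0 < c - s" "0 < u + s" using s u by auto
    have "ln (?h (c + s)) = real (m - 1) * ln (c + s) + real (n - m) * ln (u - s)"
      "ln (?h (c - s)) = real (m - 1) * ln (c - s) + real (n - m) * ln (u + s)"
      using pos by (simp_all add: ln_mult ln_realpow u_def)
    moreover have "real (m - 1) * ln (c + s) + real (n - m) * ln (u - s)
        \<le> real (m - 1) * ln (c - s) + real (n - m) * ln (u + s)"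
      unfolding Lc Lu using mult_left_mono[OF weighted_log_ratio_le[OF u s], of L] L
      by (simp add: algebra_simps)
    ultimately have "ln (?h (c + s)) \<le> ln (?h (c - s))" by simp
    then show ?thesis using pos by (simp add: u_def)
  qed
  then show ?thesis
    unfolding binom_tail_density_def by (simp add: mult.assoc mult_left_mono)
qed

lemma binom_tail_mode_ge_half:
  assumes "n + 1 \<le> 2 * m" "m < n"
  shows "1/2 \<le> binom_tail n m ((real m - 1) / (real n - 1))"
proof -
  define c where "c = (real m - 1) / (real n - 1)"
  have c: "1/2 \<le> c" "c < 1" using assms by (simp_all add: c_def field_simps)
  define \<phi> where "\<phi> s = binom_tail n m (c - s) + binom_tail n m (c + s)" for s
  \<comment> \<open>The density is heavier left of its mode c, so \<phi> decreases and 2 F(c) \<ge> F(2c - 1) + F(1).\<close>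
  have "\<phi> (1 - c) \<le> \<phi> 0"
  proof (rule deriv_nonpos_imp_antimono[where g = \<phi>])
    fix s
    show "(\<phi> has_real_derivative binom_tail_density n m (c + s) - binom_tail_density n m (c - s)) (at s)"
      unfolding \<phi>_def using assms
      by (auto intro!: derivative_eq_intros DERIV_chain2[OF binom_tail_has_derivative])
  next
    fix s assume "s \<in> {0..1 - c}"
    then show "binom_tail_density n m (c + s) - binom_tail_density n m (c - s) \<le> 0"
      using binom_tail_density_reflect_le[OF assms, of s] by (simp add: c_def)
  qed (use c in simp)
  moreover have "binom_tail n m (c + (1 - c)) = 1"
    using assms by (simp add: binom_tail_at_1)
  moreover have "0 \<le> binom_tail n m (c - (1 - c))"
    using c by (intro binom_tail_nonneg) auto
  ultimately show ?thesis by (simp add: \<phi>_def c_def)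
qed

lemma binom_tail_mean_ge_half:
  assumes "1 \<le> m" "m \<le> n"
  shows "1/2 \<le> binom_tail n m (m / n)"
proof -
  consider "m = n" | "2 * m \<le> n" | "n + 1 \<le> 2 * m" "m < n" using assms by linarith
  then show ?thesis
  proof cases
    case 1
    then show ?thesis using assms by (simp add: binom_tail_at_1)
  next
    case 2
    then show ?thesis using binom_tail_mean_ge_half_of_le_half assms by blast
  next
    case 3
    have "binom_tail n m ((real m - 1) / (real n - 1)) \<le> binom_tail n m (m / n)"
      using 3 assms by (intro binom_tail_mono) (auto simp: field_simps)
    then show ?thesis using binom_tail_mode_ge_half[OF 3] by simp
  qed
qed

lemma interval_integral_binom_tail_density:
  assumes "1 \<le> a" "a \<le> n" "0 \<le> x"
  shows "(LBINT t=0..x. binom_tail_density n a t) = binom_tail n a x"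
proof -
  have "(LBINT t=ereal 0..ereal x. binom_tail_density n a t) = binom_tail n a x - binom_tail n a 0"
  proof (rule interval_integral_FTC_finite)
    show "continuous_on {min 0 x..max 0 x} (binom_tail_density n a)"
      unfolding binom_tail_density_def by (intro continuous_intros)
    show "(binom_tail n a has_vector_derivative binom_tail_density n a t) (at t within {min 0 x..max 0 x})" for t
      using binom_tail_has_derivative[OF assms(1,2)]
      by (simp add: has_real_derivative_iff_has_vector_derivative[symmetric] has_field_derivative_at_within)
  qed
  then show ?thesis by (simp add: zero_ereal_def binom_tail_at_0[OF assms(1)])
qed

lemma reg_inc_beta_eq_binom_tail:
  assumes "1 \<le> a" "a \<le> n" "0 \<le> x" "x \<le> 1"
  shows "reg_inc_beta x (real a) (real (n - a) + 1) = binom_tail n a x"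
proof -
  define K where "K = real n * real ((n - 1) choose (a - 1))"
  have K: "0 < K" using assms by (simp add: K_def)
  let ?f = "\<lambda>t. t powr (real a - 1) * (1 - t) powr (real (n - a) + 1 - 1)"
  have integral: "(LBINT t=0..y. ?f t) = binom_tail n a y / K" if "0 \<le> y" "y \<le> 1" for y
  proof -
    have "(LBINT t=0..y. ?f t) = (LBINT t=0..y. binom_tail_density n a t / K)"
    proof (rule interval_integral_cong)
      fix t assume "t \<in> einterval (min 0 (ereal y)) (max 0 (ereal y))"
      then have "0 < t" "t < 1" using that by (auto simp: einterval_def min_def max_def)
      show "?f t = binom_tail_density n a t / K"
      proof -
        have exps: "real a - 1 = real (a - 1)" "real (n - a) + 1 - 1 = real (n - a)"
          using assms by (simp_all add: of_nat_diff)
        have "?f t = t ^ (a - 1) * (1 - t) ^ (n - a)"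
          unfolding exps using \<open>0 < t\<close> \<open>t < 1\<close> by (simp add: powr_realpow)
        moreover have "binom_tail_density n a t = K * (t ^ (a - 1) * (1 - t) ^ (n - a))"
          unfolding binom_tail_density_def K_def by simp
        ultimately show ?thesis using K by simp
      qed
    qed
    also have "\<dots> = binom_tail n a y / K"
      using interval_integral_binom_tail_density[OF assms(1,2) that(1)]
      by (simp add: interval_lebesgue_integral_divide)
    finally show ?thesis .
  qed
  have "(LBINT t=0..1. ?f t) = 1 / K"
    unfolding one_ereal_def integral[of 1, OF zero_le_one order_refl] binom_tail_at_1[OF assms(2)] ..
  then show ?thesis
    unfolding reg_inc_beta_def integral[OF assms(3,4)] using K by simp
qed

lemma reg_inc_beta_inv_binom_tail:
  assumes "1 \<le> a" "a \<le> n" "0 \<le> \<alpha>" "\<alpha> \<le> 1"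
  defines "x \<equiv> reg_inc_beta_inv \<alpha> (real a) (real (n - a) + 1)"
  shows "x \<in> {0..1}" "binom_tail n a x = \<alpha>"
proof -
  have "\<exists>x. 0 \<le> x \<and> x \<le> 1 \<and> binom_tail n a x = \<alpha>"
    using assms binom_tail_at_0 binom_tail_at_1 continuous_on_binom_tail
    by (intro IVT') (auto simp: continuous_on_subset)
  moreover have "inj_on (binom_tail n a) {0..1}"
    by (rule strict_mono_on_imp_inj_on, rule strict_mono_onI)
       (use assms in \<open>auto intro: binom_tail_strict_mono\<close>)
  ultimately have unique: "\<exists>!x. x \<in> {0..1} \<and> binom_tail n a x = \<alpha>"
    by (metis atLeastAtMost_iff inj_on_eq_iff)
  have "(\<lambda>x. x \<in> {0..1} \<and> reg_inc_beta x (real a) (real (n - a) + 1) = \<alpha>)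
      = (\<lambda>x. x \<in> {0..1} \<and> binom_tail n a x = \<alpha>)"
    using reg_inc_beta_eq_binom_tail[OF assms(1,2)] by (auto simp: fun_eq_iff)
  then have "x = (THE x. x \<in> {0..1} \<and> binom_tail n a x = \<alpha>)"
    unfolding x_def reg_inc_beta_inv_def using assms(1) by simp
  then show "x \<in> {0..1}" "binom_tail n a x = \<alpha>"
    using theI'[OF unique] by simp_all
qed

lemma q_hat_gt_imp_binom_tail_lt:
  assumes "k \<le> n" "0 \<le> \<alpha>" "\<alpha> \<le> 1" "0 \<le> p" "p < q_hat n \<alpha> k"
  shows "2 \<le> k" "binom_tail n (k - 1) p < \<alpha>"
proof -
  show "2 \<le> k"
  proof (rule ccontr)
    assume "\<not> 2 \<le> k"
    then have "q_hat n \<alpha> k = 0" by (auto simp: q_hat_def reg_inc_beta_inv_def)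
    then show False using assms by simp
  qed
  then have "q_hat n \<alpha> k = reg_inc_beta_inv \<alpha> (real (k - 1)) (real (n - (k - 1)) + 1)"
    using assms by (simp add: q_hat_def of_nat_diff add.commute)
  then have "q_hat n \<alpha> k \<le> 1" "binom_tail n (k - 1) (q_hat n \<alpha> k) = \<alpha>"
    using reg_inc_beta_inv_binom_tail[of "k - 1" n \<alpha>] \<open>2 \<le> k\<close> assms by auto
  then show "binom_tail n (k - 1) p < \<alpha>"
    using binom_tail_strict_mono[of "k - 1" n p "q_hat n \<alpha> k"] \<open>2 \<le> k\<close> assms by simp
qed

lemma sum_fun_upd_pair:
  fixes f :: "'i \<Rightarrow> 'a::ab_group_add"
  assumes "finite I" "i \<in> I" "j \<in> I" "i \<noteq> j"
  shows "(\<Sum>l\<in>I. (f(i := x, j := y)) l) = (\<Sum>l\<in>I. f l) - f i - f j + x + y"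
proof -
  have split: "(\<Sum>l\<in>I. g l) = g i + g j + (\<Sum>l\<in>I - {i, j}. g l)" for g :: "'i \<Rightarrow> 'a"
  proof -
    have "I - {i} - {j} = I - {i, j}" by auto
    then show ?thesis
      using sum.remove[OF assms(1,2), of g] sum.remove[of "I - {i}" j g] assms by (simp add: add.assoc)
  qed
  have "(\<Sum>l\<in>I - {i, j}. (f(i := x, j := y)) l) = (\<Sum>l\<in>I - {i, j}. f l)"
    by (rule sum.cong) auto
  then show ?thesis using split[of f] split[of "f(i := x, j := y)"] assms(4) by simp
qed

text \<open>Moving success probability between i and j at fixed q i + q j changes the probability
  of P by the change of q i * q j times this second difference.\<close>
definition pair_curvature :: "'i set \<Rightarrow> ('i \<Rightarrow> real) \<Rightarrow> (nat \<Rightarrow> bool) \<Rightarrow> 'i \<Rightarrow> 'i \<Rightarrow> real" where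
  "pair_curvature I q P i j =
     poibin_prob (I - {i, j}) q P - 2 * poibin_prob (I - {i, j}) q (\<lambda>c. P (Suc c))
     + poibin_prob (I - {i, j}) q (\<lambda>c. P (Suc (Suc c)))"

lemma poibin_prob_pair:
  assumes "finite I" "i \<in> I" "j \<in> I" "i \<noteq> j"
  shows "poibin_prob I q P = poibin_prob (I - {i, j}) q P
      + (q i + q j) * (poibin_prob (I - {i, j}) q (\<lambda>c. P (Suc c)) - poibin_prob (I - {i, j}) q P)
      + q i * q j * pair_curvature I q P i j"
proof -
  let ?J = "I - {i, j}"
  have I: "I = insert i (insert j ?J)" using assms by auto
  have "finite ?J" "i \<notin> insert j ?J" "j \<notin> ?J" using assms by auto
  then have "poibin_prob (insert i (insert j ?J)) q P = poibin_prob ?J q P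
      + (q i + q j) * (poibin_prob ?J q (\<lambda>c. P (Suc c)) - poibin_prob ?J q P)
      + q i * q j * pair_curvature I q P i j"
    unfolding pair_curvature_def by (simp add: poibin_prob_insert algebra_simps)
  then show ?thesis by (simp only: I [symmetric])
qed

lemma poibin_prob_pair_update:
  assumes "finite I" "i \<in> I" "j \<in> I" "i \<noteq> j" "x + y = q i + q j"
  shows "poibin_prob I (q(i := x, j := y)) P - poibin_prob I q P
       = (x * y - q i * q j) * pair_curvature I q P i j"
proof -
  let ?q' = "q(i := x, j := y)"
  have rest: "poibin_prob (I - {i, j}) ?q' Q = poibin_prob (I - {i, j}) q Q" for Q
    by (rule poibin_prob_cong) auto
  then have "pair_curvature I ?q' P i j = pair_curvature I q P i j"
    by (simp add: pair_curvature_def)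
  then show ?thesis
    using poibin_prob_pair[OF assms(1-4), of ?q' P] poibin_prob_pair[OF assms(1-4), of q P] rest assms(4,5)
    by (simp add: algebra_simps)
qed

lemma pair_curvature_ge:
  assumes "finite I"
  shows "pair_curvature I q (\<lambda>c. k \<le> c) i j
       = poibin_prob (I - {i, j}) q (\<lambda>c. Suc (Suc c) = k) - poibin_prob (I - {i, j}) q (\<lambda>c. Suc c = k)"
proof -
  let ?J = "I - {i, j}"
  have J: "finite ?J" using assms by simp
  have "(\<lambda>c. k \<le> Suc c \<and> k \<le> c) = (\<lambda>c. k \<le> c)"
    and "(\<lambda>c. k \<le> Suc c \<and> \<not> k \<le> c) = (\<lambda>c. Suc c = k)"
    and "(\<lambda>c. k \<le> Suc (Suc c) \<and> k \<le> Suc c) = (\<lambda>c. k \<le> Suc c)"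
    and "(\<lambda>c. k \<le> Suc (Suc c) \<and> \<not> k \<le> Suc c) = (\<lambda>c. Suc (Suc c) = k)"
    by auto
  then have one: "poibin_prob ?J q (\<lambda>c. k \<le> Suc c)
      = poibin_prob ?J q (\<lambda>c. k \<le> c) + poibin_prob ?J q (\<lambda>c. Suc c = k)"
    and two: "poibin_prob ?J q (\<lambda>c. k \<le> Suc (Suc c))
      = poibin_prob ?J q (\<lambda>c. k \<le> Suc c) + poibin_prob ?J q (\<lambda>c. Suc (Suc c) = k)"
    using poibin_prob_split[OF J, of q "\<lambda>c. k \<le> Suc c" "\<lambda>c. k \<le> c"]
      poibin_prob_split[OF J, of q "\<lambda>c. k \<le> Suc (Suc c)" "\<lambda>c. k \<le> Suc c"]
    by simp_all
  show ?thesis unfolding pair_curvature_def two one by simp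
qed

lemma poibin_prob_const_point:
  assumes "finite M"
  shows "poibin_prob M (\<lambda>_. a) (\<lambda>c. c + t = k) = (if t \<le> k then binom_term (card M) a (k - t) else 0)"
proof -
  have "{c. c \<le> card M \<and> c + t = k} = (if t \<le> k \<and> k - t \<le> card M then {k - t} else {})"
    by auto
  then show ?thesis
    unfolding poibin_prob_const[OF assms] by (auto simp: binom_term_def binomial_eq_0)
qed

lemma binom_term_less_Suc_imp:
  assumes "0 < a" "a < 1" "binom_term m a y < binom_term m a (Suc y)"
  shows "real (Suc y) < real (m + 1) * a"
proof -
  have "0 \<le> binom_term m a y" using assms by (intro binom_term_nonneg) auto
  then have pos: "0 < binom_term m a (Suc y)" using assms(3) by linarith
  have "y < m"
  proof (rule ccontr)
    assume "\<not> y < m"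
    then have "binom_term m a (Suc y) = 0" by (simp add: binom_term_def)
    then show False using pos by simp
  qed
  have "binom_term m a (Suc y) * (real (Suc y) * (1 - a)) = binom_term m a y * (real (m - y) * a)"
    using binom_term_Suc[OF \<open>y < m\<close>] by (simp add: mult.assoc)
  also have "\<dots> < binom_term m a (Suc y) * (real (m - y) * a)"
    using assms \<open>y < m\<close> by (intro mult_strict_right_mono) simp_all
  finally have "real (Suc y) * (1 - a) < real (m - y) * a"
    using pos by simp
  then show ?thesis using \<open>y < m\<close> by (simp add: of_nat_diff algebra_simps)
qed

lemma poibin_prob_Un_zeros_ones:
  assumes "finite Z" "finite Os" "finite M" "Z \<inter> Os = {}" "Z \<inter> M = {}" "Os \<inter> M = {}"
    and "\<And>i. i \<in> Z \<Longrightarrow> q i = 0" "\<And>i. i \<in> Os \<Longrightarrow> q i = 1" "\<And>i. i \<in> M \<Longrightarrow> q i = a"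
  shows "poibin_prob (Z \<union> Os \<union> M) q P = poibin_prob M (\<lambda>_. a) (\<lambda>c. P (c + card Os))"
proof -
  have "poibin_prob (Z \<union> (Os \<union> M)) q P = poibin_prob (Os \<union> M) q P"
    by (rule poibin_prob_Un_zeros) (use assms in auto)
  also have "\<dots> = poibin_prob M q (\<lambda>c. P (c + card Os))"
    by (rule poibin_prob_Un_ones) (use assms in auto)
  also have "\<dots> = poibin_prob M (\<lambda>_. a) (\<lambda>c. P (c + card Os))"
    by (rule poibin_prob_cong) (use assms in auto)
  finally show ?thesis by (simp add: Un_assoc)
qed

locale three_valued_profile =
  fixes I Z Os M :: "'i set" and q :: "'i \<Rightarrow> real" and a :: real
  assumes finite_I: "finite I" and partition: "I = Z \<union> Os \<union> M"
    and disjoint: "Z \<inter> Os = {}" "Z \<inter> M = {}" "Os \<inter> M = {}"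
    and zeros: "\<And>i. i \<in> Z \<Longrightarrow> q i = 0" and ones: "\<And>i. i \<in> Os \<Longrightarrow> q i = 1"
    and mids: "\<And>i. i \<in> M \<Longrightarrow> q i = a" and mid_value: "0 < a" "a < 1"
begin

lemma finite_parts: "finite Z" "finite Os" "finite M"
  using finite_I partition by auto

lemma sum_eq: "(\<Sum>i\<in>I. q i) = real (card Os) + real (card M) * a"
proof -
  have "(\<Sum>i\<in>I. q i) = (\<Sum>i\<in>Z. q i) + (\<Sum>i\<in>Os. q i) + (\<Sum>i\<in>M. q i)"
    unfolding partition using finite_parts disjoint by (simp add: sum.union_disjoint Int_Un_distrib2)
  then show ?thesis using zeros ones mids by simp
qed

lemma pair_curvature_neg_bound:
  assumes "pair_curvature I q (\<lambda>c. k \<le> c) i j < 0"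
  shows "real k - 1 - real (card (Os - {i, j})) < real (card (M - {i, j}) + 1) * a"
proof -
  let ?r = "card (Os - {i, j})" and ?b = "binom_term (card (M - {i, j})) a"
  have point: "poibin_prob (I - {i, j}) q (\<lambda>c. c + t = k) = (if ?r + t \<le> k then ?b (k - (?r + t)) else 0)" for t
  proof -
    have J: "I - {i, j} = (Z - {i, j}) \<union> (Os - {i, j}) \<union> (M - {i, j})" using partition by auto
    have "poibin_prob (I - {i, j}) q (\<lambda>c. c + t = k) = poibin_prob (M - {i, j}) (\<lambda>_. a) (\<lambda>c. c + ?r + t = k)"
      unfolding J by (rule poibin_prob_Un_zeros_ones) (use finite_parts disjoint zeros ones mids in auto)
    also have "\<dots> = poibin_prob (M - {i, j}) (\<lambda>_. a) (\<lambda>c. c + (?r + t) = k)"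
      by (simp add: add.assoc)
    finally show ?thesis using finite_parts by (simp add: poibin_prob_const_point)
  qed
  have "(\<lambda>c. Suc (Suc c) = k) = (\<lambda>c. c + 2 = k)" "(\<lambda>c. Suc c = k) = (\<lambda>c. c + 1 = k)" by auto
  then have "pair_curvature I q (\<lambda>c. k \<le> c) i j
      = (if ?r + 2 \<le> k then ?b (k - (?r + 2)) else 0) - (if ?r + 1 \<le> k then ?b (k - (?r + 1)) else 0)"
    using pair_curvature_ge[OF finite_I, of q k i j] by (simp only: point)
  then consider "k = ?r + 1" | "?r + 2 \<le> k" "?b (k - (?r + 2)) < ?b (Suc (k - (?r + 2)))"
    using assms by (cases "?r + 2 \<le> k"; cases "?r + 1 \<le> k") (auto simp: Suc_diff_Suc)
  then show ?thesis
  proof cases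
    case 1
    then show ?thesis using mid_value by simp
  next
    case 2
    then have "real (Suc (k - (?r + 2))) < real (card (M - {i, j}) + 1) * a"
      using binom_term_less_Suc_imp mid_value by blast
    then show ?thesis using 2 by (simp add: of_nat_diff)
  qed
qed

lemma boundary_empty_if_extremal:
  assumes neg: "\<And>i j. i \<in> I \<Longrightarrow> j \<in> I \<Longrightarrow> q i \<noteq> q j \<Longrightarrow> pair_curvature I q (\<lambda>c. k \<le> c) i j < 0"
    and k: "(\<Sum>i\<in>I. q i) + 1 \<le> real k" and "M \<noteq> {}"
  shows "Z = {}" "Os = {}"
proof -
  obtain j where j: "j \<in> M" using \<open>M \<noteq> {}\<close> by blast
  have "0 < card M" using j finite_parts card_gt_0_iff by blast
  then have card_M: "real (card (M - {j}) + 1) = real (card M)"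
    using j finite_parts by (simp add: card_Diff_singleton of_nat_diff)
  show "Z = {}"
  proof (rule ccontr)
    assume "Z \<noteq> {}"
    then obtain i where i: "i \<in> Z" by blast
    have "Os - {i, j} = Os" "M - {i, j} = M - {j}" using i j disjoint by auto
    moreover have "pair_curvature I q (\<lambda>c. k \<le> c) i j < 0"
      using i j mid_value by (intro neg) (auto simp: partition zeros mids)
    ultimately show False
      using pair_curvature_neg_bound[of k i j] card_M k by (simp add: sum_eq)
  qed
  show "Os = {}"
  proof (rule ccontr)
    assume "Os \<noteq> {}"
    then obtain i where i: "i \<in> Os" by blast
    have "Os - {j, i} = Os - {i}" "M - {j, i} = M - {j}" using i j disjoint by auto
    moreover have "0 < card Os" using i finite_parts card_gt_0_iff by blast
    then have "real (card (Os - {i})) = real (card Os) - 1"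
      using i finite_parts by (simp add: card_Diff_singleton of_nat_diff)
    moreover have "pair_curvature I q (\<lambda>c. k \<le> c) j i < 0"
      using i j mid_value by (intro neg) (auto simp: partition ones mids)
    ultimately show False
      using pair_curvature_neg_bound[of k j i] card_M k by (simp add: sum_eq)
  qed
qed

lemma tail_le_binomial_if_extremal:
  assumes neg: "\<And>i j. i \<in> I \<Longrightarrow> j \<in> I \<Longrightarrow> q i \<noteq> q j \<Longrightarrow> pair_curvature I q (\<lambda>c. k \<le> c) i j < 0"
    and k: "(\<Sum>i\<in>I. q i) + 1 \<le> real k"
  shows "poibin_prob I q (\<lambda>c. k \<le> c) \<le> binom_tail (card I) k ((\<Sum>i\<in>I. q i) / card I)"
proof (cases "M = {}")
  case True
  have "poibin_prob I q (\<lambda>c. k \<le> c) = poibin_prob M (\<lambda>_. a) (\<lambda>c. k \<le> c + card Os)"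
    unfolding partition by (rule poibin_prob_Un_zeros_ones) (use finite_parts disjoint zeros ones mids in auto)
  then have "poibin_prob I q (\<lambda>c. k \<le> c) = 0"
    using True k sum_eq by (simp add: poibin_prob_empty)
  moreover have "card Os \<le> card I" using finite_I partition by (intro card_mono) auto
  then have "0 \<le> (\<Sum>i\<in>I. q i) / card I" "(\<Sum>i\<in>I. q i) / card I \<le> 1"
    using True sum_eq by (auto simp: divide_le_eq_1)
  ultimately show ?thesis by (simp add: binom_tail_nonneg)
next
  case False
  then have "I = M" using boundary_empty_if_extremal[OF neg k] partition by simp
  then have "(\<Sum>i\<in>I. q i) / card I = a" "poibin_prob I q (\<lambda>c. k \<le> c) = poibin_prob I (\<lambda>_. a) (\<lambda>c. k \<le> c)"
    using False finite_parts sum_eq boundary_empty_if_extremal[OF neg k False] mids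
    by (auto intro: poibin_prob_cong)
  then show ?thesis by (simp add: poibin_prob_ge_const finite_I)
qed

end

lemma continuous_attains_max_then_min:
  fixes g V :: "'a::topological_space \<Rightarrow> real"
  assumes D: "compact D" "D \<noteq> {}" and g: "continuous_on UNIV g" and V: "continuous_on UNIV V"
  obtains x where "x \<in> D" "\<And>y. y \<in> D \<Longrightarrow> g y \<le> g x" "\<And>y. y \<in> D \<Longrightarrow> g x \<le> g y \<Longrightarrow> V x \<le> V y"
proof -
  obtain x0 where x0: "x0 \<in> D" "\<And>y. y \<in> D \<Longrightarrow> g y \<le> g x0"
    using continuous_attains_sup[OF D continuous_on_subset[OF g]] by auto
  define Dmax where "Dmax = D \<inter> {x. g x0 \<le> g x}"
  have "closed {x. g x0 \<le> g x}" by (rule closed_Collect_le) (use g in auto)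
  then have "compact Dmax" unfolding Dmax_def using D(1) by (rule compact_Int_closed[rotated])
  moreover have "Dmax \<noteq> {}" using x0 by (auto simp: Dmax_def)
  moreover have "continuous_on Dmax V" by (rule continuous_on_subset[OF V]) simp
  ultimately have "\<exists>x\<in>Dmax. \<forall>y\<in>Dmax. V x \<le> V y" by (rule continuous_attains_inf)
  then obtain x where x: "x \<in> Dmax" "\<And>y. y \<in> Dmax \<Longrightarrow> V x \<le> V y" by blast
  show ?thesis
  proof (rule that)
    show "x \<in> D" using x(1) by (simp add: Dmax_def)
    show "g y \<le> g x" if "y \<in> D" for y
      using x0(2)[OF that] x(1) by (simp add: Dmax_def)
    show "V x \<le> V y" if "y \<in> D" "g x \<le> g y" for y
      using x that by (simp add: Dmax_def)
  qed
qed

text \<open>Profiles vanish outside I so that the set is compact in the product topology.\<close>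
definition mean_profiles :: "'i set \<Rightarrow> real \<Rightarrow> ('i \<Rightarrow> real) set" where
  "mean_profiles I \<mu> = {q. (\<forall>i\<in>I. 0 \<le> q i \<and> q i \<le> 1) \<and> (\<forall>i. i \<notin> I \<longrightarrow> q i = 0) \<and> (\<Sum>i\<in>I. q i) = \<mu>}"

lemma compact_mean_profiles: "compact (mean_profiles (I :: 'i set) \<mu>)"
proof -
  define S where "S i = (if i \<in> I then {0..1::real} else {0})" for i
  have "compactin (product_topology (\<lambda>i. euclidean) UNIV) (PiE UNIV S)"
    by (simp add: compactin_PiE S_def)
  then have "compact (PiE UNIV S)" by (simp add: euclidean_product_topology)
  moreover have "closed {q :: 'i \<Rightarrow> real. (\<Sum>i\<in>I. q i) = \<mu>}"
    by (intro closed_Collect_eq continuous_intros continuous_on_subset[OF continuous_on_product_coordinates]) auto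
  moreover have "mean_profiles I \<mu> = PiE UNIV S \<inter> {q. (\<Sum>i\<in>I. q i) = \<mu>}"
    by (auto simp: mean_profiles_def S_def PiE_def Pi_def)
  ultimately show ?thesis by (simp add: compact_Int_closed)
qed

lemma fun_upd_pair_in_mean_profiles:
  assumes "q \<in> mean_profiles I \<mu>" "finite I" "i \<in> I" "j \<in> I" "i \<noteq> j"
    and "x \<in> {0..1}" "y \<in> {0..1}" "x + y = q i + q j"
  shows "q(i := x, j := y) \<in> mean_profiles I \<mu>"
  using assms sum_fun_upd_pair[OF assms(2-5), of q x y] by (auto simp: mean_profiles_def)

lemma extremal_pair_curvature_neg:
  assumes "finite I" and q: "q \<in> mean_profiles I \<mu>"
    and min: "\<And>q'. q' \<in> mean_profiles I \<mu> \<Longrightarrow> poibin_prob I q P \<le> poibin_prob I q' P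
                \<Longrightarrow> (\<Sum>i\<in>I. (q i)\<^sup>2) \<le> (\<Sum>i\<in>I. (q' i)\<^sup>2)"
    and ij: "i \<in> I" "j \<in> I" "q i \<noteq> q j"
  shows "pair_curvature I q P i j < 0"
proof (rule ccontr)
  assume "\<not> pair_curvature I q P i j < 0"
  have "i \<noteq> j" using ij by auto
  define m where "m = (q i + q j) / 2"
  have "q i \<in> {0..1}" "q j \<in> {0..1}" using q ij by (auto simp: mean_profiles_def)
  then have "m \<in> {0..1}" by (auto simp: m_def)
  then have q': "q(i := m, j := m) \<in> mean_profiles I \<mu>"
    using fun_upd_pair_in_mean_profiles[OF q \<open>finite I\<close> ij(1,2) \<open>i \<noteq> j\<close>] by (simp add: m_def)
  have "0 \<le> m * m - q i * q j"
    using zero_le_power2[of "q i - q j"] by (simp add: m_def power2_eq_square field_simps)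
  then have "0 \<le> (m * m - q i * q j) * pair_curvature I q P i j"
    using \<open>\<not> pair_curvature I q P i j < 0\<close> by simp
  then have "poibin_prob I q P \<le> poibin_prob I (q(i := m, j := m)) P"
    using poibin_prob_pair_update[OF \<open>finite I\<close> ij(1,2) \<open>i \<noteq> j\<close>, of m m q P] by (simp add: m_def)
  then have "(\<Sum>l\<in>I. (q l)\<^sup>2) \<le> (\<Sum>l\<in>I. (q(i := m, j := m)) l ^ 2)" using min q' by blast
  also have "(\<lambda>l. (q(i := m, j := m)) l ^ 2) = (\<lambda>l. (q l)\<^sup>2)(i := m\<^sup>2, j := m\<^sup>2)"
    by auto
  also have "(\<Sum>l\<in>I. ((\<lambda>l. (q l)\<^sup>2)(i := m\<^sup>2, j := m\<^sup>2)) l) = (\<Sum>l\<in>I. (q l)\<^sup>2) - (q i)\<^sup>2 - (q j)\<^sup>2 + m\<^sup>2 + m\<^sup>2"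
    by (rule sum_fun_upd_pair[OF \<open>finite I\<close> ij(1,2) \<open>i \<noteq> j\<close>])
  also have "\<dots> = (\<Sum>l\<in>I. (q l)\<^sup>2) - (q i - q j)\<^sup>2 / 2"
    by (simp add: m_def power2_eq_square field_simps)
  finally show False using ij(3) by simp
qed

lemma extremal_spread:
  assumes "finite I" and q: "q \<in> mean_profiles I \<mu>"
    and max: "\<And>q'. q' \<in> mean_profiles I \<mu> \<Longrightarrow> poibin_prob I q' P \<le> poibin_prob I q P"
    and ij: "i \<in> I" "j \<in> I" "q i < q j" and curv: "pair_curvature I q P i j < 0"
  shows "q i = 0 \<or> q j = 1"
proof (rule ccontr)
  assume "\<not> (q i = 0 \<or> q j = 1)"
  then have "0 < q i" "q j < 1" using q ij by (auto simp: mean_profiles_def less_le)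
  have "i \<noteq> j" using ij by auto
  define e where "e = min (q i) (1 - q j)"
  have e: "0 < e" "e \<le> q i" "e \<le> 1 - q j" using \<open>0 < q i\<close> \<open>q j < 1\<close> by (auto simp: e_def)
  then have "q i - e \<in> {0..1}" "q j + e \<in> {0..1}" using q ij by (auto simp: mean_profiles_def)
  then have "q(i := q i - e, j := q j + e) \<in> mean_profiles I \<mu>"
    using fun_upd_pair_in_mean_profiles[OF q \<open>finite I\<close> ij(1,2) \<open>i \<noteq> j\<close>] by simp
  moreover have "(q i - e) * (q j + e) - q i * q j < 0"
  proof -
    have "(q i - e) * (q j + e) - q i * q j = e * (q i - q j) - e * e" by (simp add: algebra_simps)
    moreover have "e * (q i - q j) < 0" using e ij(3) by (simp add: mult_pos_neg)
    ultimately show ?thesis using mult_pos_pos[OF e(1) e(1)] by linarith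
  qed
  then have "0 < poibin_prob I (q(i := q i - e, j := q j + e)) P - poibin_prob I q P"
    using poibin_prob_pair_update[OF \<open>finite I\<close> ij(1,2) \<open>i \<noteq> j\<close>, of "q i - e" "q j + e" q P] curv
    by (simp add: mult_neg_neg)
  ultimately show False using max by fastforce
qed

lemma interior_values_eq:
  assumes "\<And>i j. i \<in> I \<Longrightarrow> j \<in> I \<Longrightarrow> q i < q j \<Longrightarrow> q i = 0 \<or> q j = 1"
  obtains a :: real where "0 < a" "a < 1" "\<And>i. i \<in> I \<Longrightarrow> 0 < q i \<Longrightarrow> q i < 1 \<Longrightarrow> q i = a"
proof (cases "\<exists>i\<in>I. 0 < q i \<and> q i < 1")
  case True
  then obtain i0 where i0: "i0 \<in> I" "0 < q i0" "q i0 < 1" by blast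
  have "q i = q i0" if "i \<in> I" "0 < q i" "q i < 1" for i
  proof (rule ccontr)
    assume "q i \<noteq> q i0"
    then consider "q i < q i0" | "q i0 < q i" by linarith
    then show False using assms[OF that(1) i0(1)] assms[OF i0(1) that(1)] that i0 by cases auto
  qed
  then show ?thesis using that i0 by blast
next
  case False
  then show ?thesis using that[of "1/2"] by auto
qed

theorem poibin_tail_le_binomial_tail:
  assumes "finite I" "\<And>i. i \<in> I \<Longrightarrow> 0 \<le> q i \<and> q i \<le> 1" and k: "(\<Sum>i\<in>I. q i) + 1 \<le> real k"
  shows "poibin_prob I q (\<lambda>c. k \<le> c) \<le> binom_tail (card I) k ((\<Sum>i\<in>I. q i) / card I)"
proof -
  define \<mu> where "\<mu> = (\<Sum>i\<in>I. q i)"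
  let ?D = "mean_profiles I \<mu>" and ?G = "\<lambda>q. poibin_prob I q (\<lambda>c. k \<le> c)"
  define q0 where "q0 i = (if i \<in> I then q i else 0)" for i
  have q0: "q0 \<in> ?D" using assms(2) by (simp add: mean_profiles_def \<mu>_def q0_def)
  have "continuous_on UNIV (\<lambda>p. \<Sum>i\<in>I. (p i :: real)\<^sup>2)"
    by (intro continuous_intros) simp
  moreover have "?D \<noteq> {}" using q0 by blast
  ultimately obtain p where p: "p \<in> ?D" and max: "\<And>q'. q' \<in> ?D \<Longrightarrow> ?G q' \<le> ?G p"
    and min: "\<And>q'. q' \<in> ?D \<Longrightarrow> ?G p \<le> ?G q' \<Longrightarrow> (\<Sum>i\<in>I. (p i)\<^sup>2) \<le> (\<Sum>i\<in>I. (q' i)\<^sup>2)"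
    using continuous_attains_max_then_min[OF compact_mean_profiles _ poibin_prob_continuous[OF assms(1)]]
    by blast
  have neg: "pair_curvature I p (\<lambda>c. k \<le> c) i j < 0" if "i \<in> I" "j \<in> I" "p i \<noteq> p j" for i j
    using extremal_pair_curvature_neg[OF assms(1) p min that] .
  have spread: "p i = 0 \<or> p j = 1" if "i \<in> I" "j \<in> I" "p i < p j" for i j
    using extremal_spread[OF assms(1) p max that neg] that by simp
  obtain a where a: "0 < a" "a < 1" "\<And>i. i \<in> I \<Longrightarrow> 0 < p i \<Longrightarrow> p i < 1 \<Longrightarrow> p i = a"
    using interior_values_eq[of I p] spread by blast
  interpret three_valued_profile I "{i \<in> I. p i = 0}" "{i \<in> I. p i = 1}" "{i \<in> I. 0 < p i \<and> p i < 1}" p a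
  proof unfold_locales
    have "\<And>i. i \<in> I \<Longrightarrow> 0 \<le> p i \<and> p i \<le> 1" using p by (simp add: mean_profiles_def)
    then show "I = {i \<in> I. p i = 0} \<union> {i \<in> I. p i = 1} \<union> {i \<in> I. 0 < p i \<and> p i < 1}"
      by (auto simp: less_le)
  qed (use a(1,2) assms(1) in \<open>auto intro: a(3)\<close>)
  have "?G q = ?G q0" by (rule poibin_prob_cong) (simp add: q0_def)
  also have "\<dots> \<le> ?G p" by (rule max[OF q0])
  also have "\<dots> \<le> binom_tail (card I) k ((\<Sum>i\<in>I. p i) / card I)"
    using p k by (intro tail_le_binomial_if_extremal neg) (auto simp: mean_profiles_def \<mu>_def)
  finally show ?thesis using p by (simp add: mean_profiles_def \<mu>_def)
qed

lemma binom_tail_lt_half_imp_mean_lt: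
  assumes "1 \<le> j" "j \<le> n" "0 \<le> p" "p \<le> 1" "binom_tail n j p < 1/2"
  shows "real n * p < real j"
proof (rule ccontr)
  assume "\<not> real n * p < real j"
  then have "real j / real n \<le> p" using assms by (simp add: field_simps)
  then have "binom_tail n j (j / n) \<le> binom_tail n j p" using assms by (intro binom_tail_mono) auto
  then show False using binom_tail_mean_ge_half[OF assms(1,2)] assms(5) by simp
qed

lemma poibin_prob_q_hat_le_mean:
  assumes "finite I" "card I = n" "\<And>i. i \<in> I \<Longrightarrow> 0 \<le> q i \<and> q i \<le> 1" "0 \<le> \<alpha>" "\<alpha> \<le> 1/2"
  shows "1 - \<alpha> \<le> poibin_prob I q (\<lambda>c. q_hat n \<alpha> c \<le> (\<Sum>i\<in>I. q i) / n)"
proof -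
  define p where "p = (\<Sum>i\<in>I. q i) / n"
  have "(\<Sum>i\<in>I. q i) \<le> real n" using assms sum_mono[of I q "\<lambda>_. 1"] by simp
  then have p: "0 \<le> p" "p \<le> 1" using assms by (auto simp: p_def sum_nonneg divide_le_eq_1)
  show ?thesis
  proof (cases "\<exists>k. k \<le> n \<and> \<not> q_hat n \<alpha> k \<le> p")
    case False
    then have "poibin_prob I q (\<lambda>c. q_hat n \<alpha> c \<le> p) = poibin_prob I q (\<lambda>_. True)"
      using assms(1,2) by (intro poibin_prob_cong_pred) auto
    then show ?thesis using assms by (simp add: poibin_prob_True p_def)
  next
    case True
    then obtain k0 where "k0 \<le> n \<and> \<not> q_hat n \<alpha> k0 \<le> p" by blast
    from ex_least_nat_le[of "\<lambda>k. k \<le> n \<and> \<not> q_hat n \<alpha> k \<le> p", OF this]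
    obtain k where k: "k \<le> n" "\<not> q_hat n \<alpha> k \<le> p" "\<And>c. c < k \<Longrightarrow> q_hat n \<alpha> c \<le> p"
      by auto
    have "2 \<le> k" and tail: "binom_tail n (k - 1) p < \<alpha>"
      using q_hat_gt_imp_binom_tail_lt[of k n \<alpha> p] k p assms by auto
    then have "real n * p < real (k - 1)"
      using binom_tail_lt_half_imp_mean_lt[of "k - 1" n p] k p assms by simp
    moreover have "n \<noteq> 0" using \<open>2 \<le> k\<close> k(1) by simp
    ultimately have "(\<Sum>i\<in>I. q i) + 1 \<le> real k"
      using \<open>2 \<le> k\<close> by (simp add: p_def of_nat_diff)
    then have "poibin_prob I q (\<lambda>c. k \<le> c) \<le> binom_tail n k p"
      using poibin_tail_le_binomial_tail[OF assms(1,3)] assms(2) by (simp add: p_def)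
    also have "\<dots> \<le> binom_tail n (k - 1) p"
      using binom_tail_Suc_le[of "k - 1" n p] \<open>2 \<le> k\<close> k p by simp
    finally have "1 - \<alpha> < poibin_prob I q (\<lambda>c. \<not> k \<le> c)"
      using tail by (simp add: poibin_prob_Not assms(1))
    also have "\<dots> \<le> poibin_prob I q (\<lambda>c. q_hat n \<alpha> c \<le> p)"
      using k by (intro poibin_prob_mono_pred assms(1,3)) auto
    finally show ?thesis by (simp add: p_def)
  qed
qed

theorem theorem2:
  fixes M :: "'a measure" and T :: "nat \<Rightarrow> 'a \<Rightarrow> bool"
    and q :: "nat \<Rightarrow> real" and n :: nat and \<alpha> :: real
  assumes "prob_space M"
    and "n \<ge> 1"
    and "prob_space.indep_vars M (\<lambda>_. count_space UNIV) T {1..n}"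
    and "\<And>i. i \<in> {1..n} \<Longrightarrow> q i \<in> {0..1}"
    and "\<And>i. i \<in> {1..n} \<Longrightarrow> measure M {\<omega> \<in> space M. T i \<omega>} = q i"
    and "0 \<le> \<alpha>" and "\<alpha> \<le> 1/2"
  shows "measure M {\<omega> \<in> space M.
            q_hat n \<alpha> (card {i \<in> {1..n}. T i \<omega>}) \<le> (\<Sum>i=1..n. q i) / real n}
         \<ge> 1 - \<alpha>"
proof -
  interpret prob_space M by fact
  have "measure M {\<omega> \<in> space M. q_hat n \<alpha> (card {i \<in> {1..n}. T i \<omega>}) \<le> (\<Sum>i=1..n. q i) / real n}
      = poibin_prob {1..n} q (\<lambda>c. q_hat n \<alpha> c \<le> (\<Sum>i=1..n. q i) / real n)"
    using assms(2,3,5) by (intro prob_card_successes) auto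
  then show ?thesis
    using poibin_prob_q_hat_le_mean[of "{1..n}" n q \<alpha>] assms(4,6,7) by simp
qed

end
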